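(* Let $A=\mathrm{diag}([-1],G_1,\dots,G_m,[1])\in\mathbb{R}^{n\times n}$, $m\geq 1$, where each of the $1\times1$ blocks $[-1]$ and $[1]$ may or may not be present, with $G_j=\begin{bmatrix}c_j&s_j\\-s_j&c_j\end{bmatrix}$, $c_j^2+s_j^2=1$, $s_j\neq 0$, and $-1=c_0<c_1<c_2<\cdots<c_m<1=c_{m+1}$. Let $v_0\in\mathbb{R}^n$ be a unit norm vector with $d(A,v_0)\geq 2$. Suppose that $v_0^{(\ell)}\neq 0$ for some $\ell$ with $1\leq\ell\leq m$, and that $v_0^{(j)}\neq 0$ for some block index $j$ with $0\leq j\leq m+1$ (for a block that is present) such that $c_\ell c_j\leq 0$. Then for the iteration ACI($1$) below, $\alpha_k\to 0$ and $\beta_k\to 0$ as $k\to\infty$.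
   Context: Block partitioning: every $v\in\mathbb{R}^n$ is written as $v=[v^{(0)};v^{(1)};\dots;v^{(m)};v^{(m+1)}]$ with $v^{(0)}\in\mathbb{R}$ (present only if the block $[-1]$ is present), $v^{(j)}\in\mathbb{R}^2$ for $j=1,\dots,m$ (conforming with the blocks $G_j$), and $v^{(m+1)}\in\mathbb{R}$ (present only if the block $[1]$ is present). ACI($1$): for $k=0,1,2,\dots$: $\widetilde w_k=(A-\alpha_kI)v_k$ with $\alpha_k=v_k^TAv_k$; $w_k=\widetilde w_k/\|\widetilde w_k\|$; $\widetilde v_{k+1}=(A^T-\beta_kI)w_k$ with $\beta_k=w_k^TAw_k$; $v_{k+1}=\widetilde v_{k+1}/\|\widetilde v_{k+1}\|$. $d(A,v)$ is the grade of $v$ w.r.t. $A$ (degree of the monic polynomial $p$ of smallest degree with $p(A)v=0$); $\|\cdot\|$ is the Euclidean norm. *)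

theory Defs
  imports "Jordan_Normal_Form.Matrix" "HOL-Computational_Algebra.Polynomial"
begin

text \<open>Block structure of A = diag([-1], G_1, ..., G_m, [1]).
  p0: whether the leading 1x1 block [-1] is present; p1: whether the trailing
  1x1 block [1] is present.  Indices are 0-based.\<close>

definition blk_off :: "bool \<Rightarrow> nat" where
  "blk_off p0 = (if p0 then 1 else 0)"

definition aci_dim :: "nat \<Rightarrow> bool \<Rightarrow> bool \<Rightarrow> nat" where
  "aci_dim m p0 p1 = blk_off p0 + 2 * m + (if p1 then 1 else 0)"

text \<open>The matrix A; G_j = [[c j, s j], [- s j, c j]] occupies rows/columns
  blk_off p0 + 2(j-1) and blk_off p0 + 2(j-1) + 1.\<close>
definition aci_mat :: "nat \<Rightarrow> bool \<Rightarrow> bool \<Rightarrow> (nat \<Rightarrow> real) \<Rightarrow> (nat \<Rightarrow> real) \<Rightarrow> real mat" where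
  "aci_mat m p0 p1 c s =
     (let n = aci_dim m p0 p1; off = blk_off p0 in
      mat n n (\<lambda>(i, k).
        if p0 \<and> i = 0 \<and> k = 0 then -1
        else if p1 \<and> i = n - 1 \<and> k = n - 1 then 1
        else if off \<le> i \<and> i < off + 2 * m \<and> off \<le> k \<and> k < off + 2 * m
                \<and> (i - off) div 2 = (k - off) div 2 then
          (let j = (i - off) div 2 + 1 in
             if i = k then c j else if i < k then s j else - s j)
        else 0))"

text \<open>Index set of the block v^(j): j = 0 is the [-1] block, 1 \<le> j \<le> m are the
  G_j blocks, j = m+1 is the [1] block.\<close>
definition blk_idx :: "nat \<Rightarrow> bool \<Rightarrow> bool \<Rightarrow> nat \<Rightarrow> nat set" where
  "blk_idx m p0 p1 j =
     (if j = 0 then {0}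
      else if j = m + 1 then {aci_dim m p0 p1 - 1}
      else {blk_off p0 + 2 * (j - 1), blk_off p0 + 2 * (j - 1) + 1})"

definition blk_present :: "nat \<Rightarrow> bool \<Rightarrow> bool \<Rightarrow> nat \<Rightarrow> bool" where
  "blk_present m p0 p1 j = (j \<le> m + 1 \<and> (j = 0 \<longrightarrow> p0) \<and> (j = m + 1 \<longrightarrow> p1))"

definition blk_nonzero :: "nat \<Rightarrow> bool \<Rightarrow> bool \<Rightarrow> real vec \<Rightarrow> nat \<Rightarrow> bool" where
  "blk_nonzero m p0 p1 v j = (\<exists>i\<in>blk_idx m p0 p1 j. v $ i \<noteq> 0)"

definition vnorm :: "real vec \<Rightarrow> real" where
  "vnorm v = sqrt (v \<bullet> v)"

definition normalize_vec :: "real vec \<Rightarrow> real vec" where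
  "normalize_vec v = (1 / vnorm v) \<cdot>\<^sub>v v"

definition poly_mat_vec :: "real mat \<Rightarrow> real poly \<Rightarrow> real vec \<Rightarrow> real vec" where
  "poly_mat_vec A p v = vec (dim_row A) (\<lambda>r. \<Sum>i\<le>degree p. coeff p i * ((A ^\<^sub>m i) *\<^sub>v v) $ r)"

definition grade :: "real mat \<Rightarrow> real vec \<Rightarrow> nat" where
  "grade A v = (LEAST d. \<exists>p :: real poly. lead_coeff p = 1 \<and> degree p = d
                    \<and> poly_mat_vec A p v = 0\<^sub>v (dim_row A))"

definition aci_alpha :: "real mat \<Rightarrow> real vec \<Rightarrow> real" where
  "aci_alpha A v = v \<bullet> (A *\<^sub>v v)"

definition aci_w :: "real mat \<Rightarrow> real vec \<Rightarrow> real vec" where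
  "aci_w A v = normalize_vec (A *\<^sub>v v - aci_alpha A v \<cdot>\<^sub>v v)"

definition aci_beta :: "real mat \<Rightarrow> real vec \<Rightarrow> real" where
  "aci_beta A w = w \<bullet> (A *\<^sub>v w)"

definition aci_next :: "real mat \<Rightarrow> real vec \<Rightarrow> real vec" where
  "aci_next A v = (let w = aci_w A v in
                     normalize_vec (transpose_mat A *\<^sub>v w - aci_beta A w \<cdot>\<^sub>v w))"

definition aci_v :: "real mat \<Rightarrow> real vec \<Rightarrow> nat \<Rightarrow> real vec" where
  "aci_v A v0 k = (aci_next A ^^ k) v0"

definition aci_alpha_seq :: "real mat \<Rightarrow> real vec \<Rightarrow> nat \<Rightarrow> real" where
  "aci_alpha_seq A v0 k = aci_alpha A (aci_v A v0 k)"

definition aci_beta_seq :: "real mat \<Rightarrow> real vec \<Rightarrow> nat \<Rightarrow> real" where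
  "aci_beta_seq A v0 k = aci_beta A (aci_w A (aci_v A v0 k))"

end

theory Submission
  imports Defs "HOL-Analysis.Convex"
begin

text \<open>
  \<open>A\<close> is orthogonal and acts on the coordinate pair of each block \<open>G\<^sub>b\<close> as a rotation. Hence, if
  \<open>P\<^sub>b(u)\<close> is the squared mass of a unit vector \<open>u\<close> on block \<open>b\<close> and \<open>a = \<Sum>\<^sub>b c\<^sub>b P\<^sub>b(u)\<close> its
  Rayleigh quotient, the normalisation of \<open>(A - a I) u\<close> (and likewise of \<open>(A\<^sup>T - a I) u\<close>) has block
  masses \<open>P\<^sub>b(u) (1 + a\<^sup>2 - 2 a c\<^sub>b) / (1 - a\<^sup>2)\<close>.

  Since \<open>c\<^sub>\<ell> c\<^sub>j \<le> 0\<close> there are weights \<open>\<pi>, 1 - \<pi> \<ge> 0\<close> with \<open>\<pi> c\<^sub>\<ell> + (1 - \<pi>) c\<^sub>j = 0\<close>, and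
  concavity of \<open>ln\<close> shows that \<open>\<Phi> = \<pi> ln P\<^sub>\<ell> + (1 - \<pi>) ln P\<^sub>j\<close> never decreases along ACI(1).
  So the masses on blocks \<open>\<ell>\<close> and \<open>j\<close> stay bounded below, which bounds the variance of \<open>c\<close>
  below by a multiple of \<open>a\<^sup>2\<close> and keeps the second moment of \<open>c\<close> away from \<open>1\<close>. The new
  Rayleigh quotient \<open>(a (1 + a\<^sup>2) - 2 a E[c\<^sup>2]) / (1 - a\<^sup>2)\<close> then obeys
  \<open>|a'| \<le> |a| (1 - \<eta> a\<^sup>2)\<close> for a fixed \<open>\<eta> > 0\<close>, which forces \<open>\<alpha>\<^sub>k, \<beta>\<^sub>k \<rightarrow> 0\<close>.
\<close>

section \<open>Real inequalities\<close>

lemma shift_factor_pos: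
  fixes a g :: real
  assumes "a\<^sup>2 < 1" "g\<^sup>2 \<le> 1"
  shows "0 < 1 + a\<^sup>2 - 2 * a * g"
proof -
  have "0 < (a - g)\<^sup>2 + (1 - g\<^sup>2)"
  proof (cases "a = g")
    case False
    then have "0 < (a - g)\<^sup>2" by simp
    then show ?thesis using assms(2) by linarith
  qed (use assms(1) in simp)
  moreover have "(a - g)\<^sup>2 + (1 - g\<^sup>2) = 1 + a\<^sup>2 - 2 * a * g" by (simp add: power2_diff)
  ultimately show ?thesis by simp
qed

lemma ln_shift_factor_ge:
  fixes a g :: real
  assumes "a\<^sup>2 < 1" "g\<^sup>2 \<le> 1"
  shows "(1 + g) * ln (1 - a) + (1 - g) * ln (1 + a) \<le> ln (1 + a\<^sup>2 - 2 * a * g)"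
proof -
  define t where "t = (1 - g) / 2"
  have "\<bar>a\<bar> < 1" "\<bar>g\<bar> \<le> 1" using assms by (simp_all add: abs_square_less_1 abs_square_le_1)
  then have pos: "0 < 1 - a" "0 < 1 + a" and t: "0 \<le> t" "t \<le> 1" by (auto simp: t_def)
  have "(1 + g) * ln (1 - a) + (1 - g) * ln (1 + a) = (1 - t) * ln ((1 - a)\<^sup>2) + t * ln ((1 + a)\<^sup>2)"
    using pos by (simp add: ln_realpow t_def field_simps)
  also have "\<dots> \<le> ln ((1 - t) *\<^sub>R (1 - a)\<^sup>2 + t *\<^sub>R (1 + a)\<^sup>2)"
    using pos t by (intro concave_onD[OF ln_concave]) auto
  also have "(1 - t) *\<^sub>R (1 - a)\<^sup>2 + t *\<^sub>R (1 + a)\<^sup>2 = 1 + a\<^sup>2 - 2 * a * g"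
    by (simp add: t_def power2_eq_square field_simps)
  finally show ?thesis .
qed

lemma ln_one_minus_sq_le_balanced:
  fixes a gx gy p :: real
  assumes "a\<^sup>2 < 1" "gx\<^sup>2 \<le> 1" "gy\<^sup>2 \<le> 1" "0 \<le> p" "p \<le> 1" "p * gx + (1 - p) * gy = 0"
  shows "ln (1 - a\<^sup>2) \<le> p * ln (1 + a\<^sup>2 - 2 * a * gx) + (1 - p) * ln (1 + a\<^sup>2 - 2 * a * gy)"
proof -
  have "\<bar>a\<bar> < 1" using assms(1) by (simp add: abs_square_less_1)
  moreover have "1 - a\<^sup>2 = (1 - a) * (1 + a)" by (simp add: power2_eq_square algebra_simps)
  ultimately have "ln (1 - a\<^sup>2) = ln (1 - a) + ln (1 + a)" by (auto simp: ln_mult abs_less_iff)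
  also have "\<dots> = p * ((1 + gx) * ln (1 - a) + (1 - gx) * ln (1 + a))
      + (1 - p) * ((1 + gy) * ln (1 - a) + (1 - gy) * ln (1 + a))"
  proof -
    have "p * ((1 + gx) * L1 + (1 - gx) * L2) + (1 - p) * ((1 + gy) * L1 + (1 - gy) * L2)
        = (L1 + L2) + (p * gx + (1 - p) * gy) * (L1 - L2)" for L1 L2 :: real
      by (simp add: algebra_simps)
    then show ?thesis using assms(6) by simp
  qed
  also have "\<dots> \<le> p * ln (1 + a\<^sup>2 - 2 * a * gx) + (1 - p) * ln (1 + a\<^sup>2 - 2 * a * gy)"
    using assms by (intro add_mono mult_left_mono ln_shift_factor_ge) auto
  finally show ?thesis .
qed

lemma exp_div_le_of_weighted_ln_ge:
  fixes P Q p \<Phi> :: real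
  assumes "0 < P" "0 < Q" "Q \<le> 1" "0 < p" "p \<le> 1" "\<Phi> \<le> p * ln P + (1 - p) * ln Q"
  shows "exp (\<Phi> / p) \<le> P"
proof -
  have "(1 - p) * ln Q \<le> 0" using assms(2-5) by (simp add: mult_nonneg_nonpos)
  then have "\<Phi> / p \<le> ln P" using assms(4,6) by (simp add: divide_le_eq mult.commute)
  then show ?thesis using assms(1) by (metis exp_le_cancel_iff exp_ln)
qed

lemma balancing_weight:
  fixes a b :: real
  assumes "a * b \<le> 0" "a\<^sup>2 < 1" "b\<^sup>2 \<le> 1"
  obtains p where "0 \<le> p" "p \<le> 1" "p * a + (1 - p) * b = 0"
    "0 < p * (1 - a\<^sup>2) + (1 - p) * (1 - b\<^sup>2)"
proof (cases "b = 0")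
  case True
  then show ?thesis by (intro that[of 0]) auto
next
  case False
  define p where "p = \<bar>b\<bar> / (\<bar>a\<bar> + \<bar>b\<bar>)"
  have p: "0 < p" "p \<le> 1" using False by (auto simp: p_def)
  have "\<bar>b\<bar> * a + \<bar>a\<bar> * b = 0" using assms(1) by (auto simp: mult_le_0_iff)
  moreover have "p * a + (1 - p) * b = (\<bar>b\<bar> * a + \<bar>a\<bar> * b) / (\<bar>a\<bar> + \<bar>b\<bar>)"
  proof -
    have "1 - p = \<bar>a\<bar> / (\<bar>a\<bar> + \<bar>b\<bar>)" using False by (simp add: p_def field_simps)
    then show ?thesis by (simp add: p_def add_divide_distrib)
  qed
  ultimately have "p * a + (1 - p) * b = 0" by simp
  moreover have "0 < p * (1 - a\<^sup>2) + (1 - p) * (1 - b\<^sup>2)"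
    using p assms(2,3) by (intro add_pos_nonneg) auto
  ultimately show ?thesis using p by (intro that[of p]) auto
qed

lemma rayleigh_update_contracts:
  fixes a M d k :: real
  assumes "d * a\<^sup>2 \<le> M - a\<^sup>2" "d * k \<le> 1 - M" "0 \<le> d" "0 < k" "a\<^sup>2 < 1"
  shows "\<bar>(a * (1 + a\<^sup>2) - 2 * a * M) / (1 - a\<^sup>2)\<bar> \<le> \<bar>a\<bar> * (1 - 2 * d * min 1 k * a\<^sup>2)"
proof -
  define q where "q = 2 * d * min 1 k * a\<^sup>2"
  have "min 1 k * a\<^sup>2 \<le> a\<^sup>2" "min 1 k * a\<^sup>2 \<le> k"
    using assms(4,5) mult_left_le_one_le[of "a\<^sup>2" "min 1 k"] mult_right_le_one_le[of "min 1 k" "a\<^sup>2"]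
    by auto
  then have "q \<le> 2 * d * a\<^sup>2" "q \<le> 2 * d * k"
    using assms(3) unfolding q_def by (simp_all add: mult_left_mono)
  moreover have "0 \<le> q" using assms(3,4) by (simp add: q_def)
  ultimately have bound: "\<bar>1 + a\<^sup>2 - 2 * M\<bar> \<le> (1 - a\<^sup>2) - q"
    using assms(1,2) by (simp add: abs_le_iff)
  have pos: "0 < 1 - a\<^sup>2" using assms(5) by simp
  have "\<bar>(a * (1 + a\<^sup>2) - 2 * a * M) / (1 - a\<^sup>2)\<bar> = \<bar>a\<bar> * \<bar>1 + a\<^sup>2 - 2 * M\<bar> / (1 - a\<^sup>2)"
    using pos by (simp add: abs_mult[symmetric] algebra_simps)
  also have "\<dots> \<le> \<bar>a\<bar> * ((1 - a\<^sup>2) - q) / (1 - a\<^sup>2)"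
    using bound pos by (intro divide_right_mono mult_left_mono) auto
  also have "\<dots> = \<bar>a\<bar> * (1 - q / (1 - a\<^sup>2))" using pos by (simp add: field_simps)
  also have "\<dots> \<le> \<bar>a\<bar> * (1 - q)"
  proof -
    have "q * (1 - a\<^sup>2) \<le> q" using \<open>0 \<le> q\<close> by (simp add: mult_left_le)
    then have "q \<le> q / (1 - a\<^sup>2)" using pos by (simp add: le_divide_eq)
    then show ?thesis by (simp add: mult_left_mono)
  qed
  finally show ?thesis unfolding q_def .
qed

lemma cubic_decay_tendsto_zero:
  fixes x :: "nat \<Rightarrow> real"
  assumes "\<And>k. 0 \<le> x k" "\<And>k. x (Suc k) \<le> x k * (1 - e * (x k)\<^sup>2)" "0 < e"
  shows "x \<longlonglongrightarrow> 0"
proof -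
  have "x (Suc k) \<le> x k" for k
    using assms(2)[of k] mult_left_le[of "1 - e * (x k)\<^sup>2" "x k"] assms(1,3) by simp
  then have "decseq x" by (rule decseq_SucI)
  then obtain L where L: "x \<longlonglongrightarrow> L" using decseq_convergent[of x 0] assms(1) by blast
  have "0 \<le> L" using assms(1) by (intro LIMSEQ_le_const[OF L]) auto
  have "(\<lambda>k. x (Suc k)) \<longlonglongrightarrow> L" using L by (rule LIMSEQ_Suc)
  moreover have "(\<lambda>k. x k * (1 - e * (x k)\<^sup>2)) \<longlonglongrightarrow> L * (1 - e * L\<^sup>2)"
    using L by (intro tendsto_intros)
  ultimately have "L \<le> L * (1 - e * L\<^sup>2)" using assms(2) by (intro LIMSEQ_le) auto
  then have "e * L ^ 3 \<le> 0" by (simp add: algebra_simps power3_eq_cube power2_eq_square)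
  then have "L = 0" using \<open>0 \<le> L\<close> assms(3) by (simp add: mult_le_0_iff)
  then show ?thesis using L by simp
qed

section \<open>Rotations on coordinate pairs\<close>

locale paired_rotation =
  fixes n :: nat and partner :: "nat \<Rightarrow> nat" and block :: "nat \<Rightarrow> nat" and c :: "nat \<Rightarrow> real"
  assumes partner_less: "i < n \<Longrightarrow> partner i < n"
    and partner_partner: "i < n \<Longrightarrow> partner (partner i) = i"
    and block_partner: "i < n \<Longrightarrow> block (partner i) = block i"
begin

text \<open>\<open>L\<close> acts on each coordinate pair \<open>{i, partner i}\<close> as a rotation with cosine \<open>c (block i)\<close>
  and sine \<open>\<sigma> i\<close>; a fixed point of \<open>partner\<close> is a \<open>1 \<times> 1\<close> block \<open>[\<plusminus>1]\<close>, since then \<open>\<sigma> i = 0\<close>.\<close>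
definition rotation :: "real mat \<Rightarrow> (nat \<Rightarrow> real) \<Rightarrow> bool" where
  "rotation L \<sigma> \<longleftrightarrow> L \<in> carrier_mat n n
     \<and> (\<forall>i<n. \<forall>k<n. L $$ (i, k) = (if k = i then c (block i) else if k = partner i then \<sigma> i else 0))
     \<and> (\<forall>i<n. \<sigma> (partner i) = - \<sigma> i) \<and> (\<forall>i<n. (c (block i))\<^sup>2 + (\<sigma> i)\<^sup>2 = 1)"

definition mass :: "real vec \<Rightarrow> (nat \<Rightarrow> real) \<Rightarrow> real" where
  "mass u h = (\<Sum>i = 0..<n. h (block i) * (u $ i)\<^sup>2)"

definition block_mass :: "real vec \<Rightarrow> nat \<Rightarrow> real" where
  "block_mass u b = mass u (\<lambda>b'. if b' = b then 1 else 0)"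

lemma sum_partner: "(\<Sum>i = 0..<n. f (partner i)) = (\<Sum>i = 0..<n. f i :: real)"
  by (rule sum.reindex_bij_witness[where i = partner and j = partner])
    (auto simp: partner_less partner_partner)

lemma sum_partner_antisym:
  assumes "\<And>i. i < n \<Longrightarrow> f (partner i) = - f i"
  shows "(\<Sum>i = 0..<n. f i :: real) = 0"
proof -
  have "(\<Sum>i = 0..<n. f i) = (\<Sum>i = 0..<n. - f i)"
    using assms by (simp add: sum_partner[of f, symmetric])
  then show ?thesis by (simp add: sum_negf)
qed

lemma rotation_carrier: "rotation L \<sigma> \<Longrightarrow> L \<in> carrier_mat n n"
  by (simp add: rotation_def)

lemma rotation_cos_sq_le_one: "rotation L \<sigma> \<Longrightarrow> i < n \<Longrightarrow> (c (block i))\<^sup>2 \<le> 1"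
  unfolding rotation_def by (metis le_add_same_cancel1 zero_le_power2)

lemma rotation_mult_vec:
  assumes L: "rotation L \<sigma>" and u: "u \<in> carrier_vec n" and i: "i < n"
  shows "(L *\<^sub>v u) $ i = c (block i) * u $ i + \<sigma> i * u $ partner i"
proof -
  have fixed: "\<sigma> i = 0" if "partner i = i"
    using L i that unfolding rotation_def by force
  have "(L *\<^sub>v u) $ i = (\<Sum>k = 0..<n. L $$ (i, k) * u $ k)"
    using L u i by (auto simp: rotation_def scalar_prod_def)
  also have "\<dots> = (\<Sum>k = 0..<n. (if k = i then c (block i) * u $ i else 0)
      + (if k = partner i then \<sigma> i * u $ partner i else 0))"
    using L i fixed unfolding rotation_def by (intro sum.cong) auto
  also have "\<dots> = c (block i) * u $ i + \<sigma> i * u $ partner i"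
    using i partner_less[OF i] by (simp add: sum.distrib)
  finally show ?thesis .
qed

lemma rotation_transpose:
  assumes L: "rotation L \<sigma>"
  shows "rotation (transpose_mat L) (\<lambda>i. - \<sigma> i)"
  unfolding rotation_def
proof (intro conjI allI impI)
  show "transpose_mat L \<in> carrier_mat n n" using L by (simp add: rotation_def)
next
  fix i k assume ik: "i < n" "k < n"
  have "i = partner k \<longleftrightarrow> k = partner i" using ik partner_partner by metis
  then show "transpose_mat L $$ (i, k) =
      (if k = i then c (block i) else if k = partner i then - \<sigma> i else 0)"
    using L ik unfolding rotation_def by (auto simp: partner_partner)
qed (use L in \<open>auto simp: rotation_def partner_less\<close>)

lemma rotation_rayleigh:
  assumes L: "rotation L \<sigma>" and u: "u \<in> carrier_vec n"
  shows "u \<bullet> (L *\<^sub>v u) = mass u c"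
proof -
  have "u \<bullet> (L *\<^sub>v u) = (\<Sum>i = 0..<n. u $ i * (L *\<^sub>v u) $ i)"
    using rotation_carrier[OF L] by (simp add: scalar_prod_def carrier_matD del: index_mult_mat_vec)
  also have "\<dots> = (\<Sum>i = 0..<n. c (block i) * (u $ i)\<^sup>2 + \<sigma> i * (u $ i * u $ partner i))"
    by (intro sum.cong refl) (simp add: rotation_mult_vec[OF L u] power2_eq_square algebra_simps)
  also have "\<dots> = mass u c"
    using L sum_partner_antisym[of "\<lambda>i. \<sigma> i * (u $ i * u $ partner i)"]
    unfolding mass_def rotation_def by (simp add: sum.distrib partner_partner partner_less mult.commute)
  finally show ?thesis .
qed

text \<open>Within a pair the cross terms of \<open>(L - t I) u\<close> cancel, and \<open>(c - t)\<^sup>2 + \<sigma>\<^sup>2 = 1 + t\<^sup>2 - 2 t c\<close>.\<close>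
lemma rotation_mass_shift:
  assumes L: "rotation L \<sigma>" and u: "u \<in> carrier_vec n"
  shows "mass (L *\<^sub>v u - t \<cdot>\<^sub>v u) h = mass u (\<lambda>b. h b * (1 + t\<^sup>2 - 2 * t * c b))"
proof -
  have \<sigma>: "\<And>i. i < n \<Longrightarrow> \<sigma> (partner i) = - \<sigma> i" "\<And>i. i < n \<Longrightarrow> (c (block i))\<^sup>2 + (\<sigma> i)\<^sup>2 = 1"
    using L unfolding rotation_def by auto
  define X where "X i = h (block i) * (c (block i) - t) * \<sigma> i * (u $ i * u $ partner i)" for i
  define Y where "Y i = h (block i) * (\<sigma> i)\<^sup>2 * (u $ i)\<^sup>2" for i
  have "mass (L *\<^sub>v u - t \<cdot>\<^sub>v u) h
      = (\<Sum>i = 0..<n. h (block i) * (c (block i) - t)\<^sup>2 * (u $ i)\<^sup>2 + 2 * X i + Y (partner i))"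
    unfolding mass_def X_def Y_def
  proof (intro sum.cong refl)
    fix i assume "i \<in> {0..<n}"
    then have i: "i < n" by simp
    have e: "(L *\<^sub>v u - t \<cdot>\<^sub>v u) $ i = (c (block i) - t) * u $ i + \<sigma> i * u $ partner i"
      using L u i rotation_mult_vec[OF L u i] by (auto simp: rotation_def algebra_simps)
    show "h (block i) * ((L *\<^sub>v u - t \<cdot>\<^sub>v u) $ i)\<^sup>2 = h (block i) * (c (block i) - t)\<^sup>2 * (u $ i)\<^sup>2
        + 2 * (h (block i) * (c (block i) - t) * \<sigma> i * (u $ i * u $ partner i))
        + h (block (partner i)) * (\<sigma> (partner i))\<^sup>2 * (u $ partner i)\<^sup>2"
      unfolding e using i by (simp add: block_partner \<sigma>(1) power2_eq_square algebra_simps)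
  qed
  also have "\<dots> = (\<Sum>i = 0..<n. h (block i) * (c (block i) - t)\<^sup>2 * (u $ i)\<^sup>2)
      + 2 * (\<Sum>i = 0..<n. X i) + (\<Sum>i = 0..<n. Y (partner i))"
    by (simp add: sum.distrib sum_distrib_left)
  also have "(\<Sum>i = 0..<n. X i) = 0"
    by (rule sum_partner_antisym) (simp add: X_def \<sigma>(1) block_partner partner_partner)
  also have "(\<Sum>i = 0..<n. Y (partner i)) = (\<Sum>i = 0..<n. Y i)" by (rule sum_partner)
  also have "(\<Sum>i = 0..<n. h (block i) * (c (block i) - t)\<^sup>2 * (u $ i)\<^sup>2) + 2 * 0 + (\<Sum>i = 0..<n. Y i)
      = (\<Sum>i = 0..<n. h (block i) * ((c (block i) - t)\<^sup>2 + (\<sigma> i)\<^sup>2) * (u $ i)\<^sup>2)"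
    by (simp add: Y_def sum.distrib[symmetric] algebra_simps)
  also have "\<dots> = mass u (\<lambda>b. h b * (1 + t\<^sup>2 - 2 * t * c b))"
    unfolding mass_def using \<sigma>(2) by (intro sum.cong) (auto simp: power2_diff algebra_simps)
  finally show ?thesis .
qed

lemma mass_smult: "mass (r \<cdot>\<^sub>v u) h = r\<^sup>2 * mass u h" if "u \<in> carrier_vec n"
  using that unfolding mass_def by (simp add: sum_distrib_left power_mult_distrib algebra_simps)

lemma vnorm_eq_sqrt_mass: "vnorm u = sqrt (mass u (\<lambda>_. 1))" if "u \<in> carrier_vec n"
  using that unfolding vnorm_def mass_def scalar_prod_def by (simp add: power2_eq_square)

lemma mass_normalize:
  assumes "u \<in> carrier_vec n" "0 < mass u (\<lambda>_. 1)"
  shows "mass (normalize_vec u) h = mass u h / mass u (\<lambda>_. 1)"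
  using assms by (simp add: normalize_vec_def mass_smult vnorm_eq_sqrt_mass power_divide)

lemma mass_mono: "(\<And>i. i < n \<Longrightarrow> h (block i) \<le> g (block i)) \<Longrightarrow> mass u h \<le> mass u g"
  unfolding mass_def by (intro sum_mono mult_right_mono) auto

lemma mass_quadratic:
  "mass u (\<lambda>b. r + t * c b + q * (c b)\<^sup>2) = r * mass u (\<lambda>_. 1) + t * mass u c + q * mass u (\<lambda>b. (c b)\<^sup>2)"
  unfolding mass_def by (simp add: sum.distrib sum_distrib_left algebra_simps)

lemma mass_block_weight: "mass u (\<lambda>b'. (if b' = b then 1 else 0) * f b') = f b * block_mass u b"
  unfolding block_mass_def mass_def sum_distrib_left by (intro sum.cong) auto

lemma block_mass_le_mass:
  assumes "\<And>i. i < n \<Longrightarrow> 0 \<le> f (block i)"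
  shows "f b * block_mass u b \<le> mass u f"
  unfolding mass_block_weight[symmetric] using assms by (intro mass_mono) auto

lemma block_mass_le_one: "mass u (\<lambda>_. 1) = 1 \<Longrightarrow> block_mass u b \<le> 1"
  unfolding block_mass_def using mass_mono[of "\<lambda>b'. if b' = b then 1 else 0" "\<lambda>_. 1" u] by simp

lemma block_mass_pos:
  assumes "i < n" "block i = b" "u $ i \<noteq> 0"
  shows "0 < block_mass u b"
proof -
  have "(u $ i)\<^sup>2 \<le> block_mass u b"
    unfolding block_mass_def mass_def
    using assms(1,2) member_le_sum[of i "{0..<n}" "\<lambda>k. (if block k = b then 1 else 0) * (u $ k)\<^sup>2"]
    by auto
  then show ?thesis using assms(3) by (meson less_le_trans zero_less_power2)
qed

definition shift_step :: "real mat \<Rightarrow> real vec \<Rightarrow> real vec" where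
  "shift_step L u = normalize_vec (L *\<^sub>v u - mass u c \<cdot>\<^sub>v u)"

lemma shift_step_carrier:
  assumes "rotation L \<sigma>" "u \<in> carrier_vec n"
  shows "shift_step L u \<in> carrier_vec n"
  using rotation_carrier[OF assms(1)] assms(2) by (simp add: shift_step_def normalize_vec_def)

lemma mass_shift_step:
  assumes L: "rotation L \<sigma>" and u: "u \<in> carrier_vec n" and unit: "mass u (\<lambda>_. 1) = 1"
    and a: "(mass u c)\<^sup>2 < 1"
  shows "mass (shift_step L u) h
    = mass u (\<lambda>b. h b * (1 + (mass u c)\<^sup>2 - 2 * mass u c * c b)) / (1 - (mass u c)\<^sup>2)"
proof -
  define v where "v = L *\<^sub>v u - mass u c \<cdot>\<^sub>v u"
  have v: "v \<in> carrier_vec n" using rotation_carrier[OF L] u by (simp add: v_def)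
  have "mass v (\<lambda>_. 1) = mass u (\<lambda>b. (1 + (mass u c)\<^sup>2) + (- 2 * mass u c) * c b + 0 * (c b)\<^sup>2)"
    unfolding v_def rotation_mass_shift[OF L u] by (simp add: algebra_simps)
  also have "\<dots> = 1 - (mass u c)\<^sup>2"
    unfolding mass_quadratic unit by (simp add: power2_eq_square)
  finally have "mass v (\<lambda>_. 1) = 1 - (mass u c)\<^sup>2" .
  then show ?thesis
    using mass_normalize[OF v, of h] a rotation_mass_shift[OF L u]
    by (simp add: shift_step_def v_def)
qed

lemma aci_w_eq_shift_step: "rotation A \<sigma> \<Longrightarrow> u \<in> carrier_vec n \<Longrightarrow> aci_w A u = shift_step A u"
  by (simp add: aci_w_def aci_alpha_def shift_step_def rotation_rayleigh)

lemma aci_next_eq_shift_step: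
  assumes A: "rotation A \<sigma>" and u: "u \<in> carrier_vec n"
  shows "aci_next A u = shift_step (transpose_mat A) (shift_step A u)"
proof -
  have w: "shift_step A u \<in> carrier_vec n" by (rule shift_step_carrier[OF A u])
  show ?thesis
    unfolding aci_next_def Let_def aci_w_eq_shift_step[OF A u] aci_beta_def rotation_rayleigh[OF A w]
    by (simp add: shift_step_def)
qed

end

section \<open>A Lyapunov function on two blocks\<close>

locale two_block_descent = paired_rotation +
  fixes x y :: nat and p :: real
  assumes cos_bound: "i < n \<Longrightarrow> (c (block i))\<^sup>2 \<le> 1"
    and cos_x: "(c x)\<^sup>2 < 1" and cos_y: "(c y)\<^sup>2 \<le> 1"
    and weight: "0 \<le> p" "p \<le> 1"
    and balanced: "p * c x + (1 - p) * c y = 0"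
    and spread: "0 < p * (1 - (c x)\<^sup>2) + (1 - p) * (1 - (c y)\<^sup>2)"
begin

definition potential :: "real vec \<Rightarrow> real" where
  "potential u = p * ln (block_mass u x) + (1 - p) * ln (block_mass u y)"

definition admissible :: "real \<Rightarrow> real vec \<Rightarrow> bool" where
  "admissible \<Phi> u \<longleftrightarrow> u \<in> carrier_vec n \<and> mass u (\<lambda>_. 1) = 1
     \<and> 0 < block_mass u x \<and> 0 < block_mass u y \<and> \<Phi> \<le> potential u"

definition mass_floor :: "real \<Rightarrow> real" where
  "mass_floor \<Phi> = min (if 0 < p then exp (\<Phi> / p) else 1) (if p < 1 then exp (\<Phi> / (1 - p)) else 1)"

definition contraction_rate :: "real \<Rightarrow> real" where
  "contraction_rate \<Phi> =
     2 * mass_floor \<Phi> * min 1 (p * (1 - (c x)\<^sup>2) + (1 - p) * (1 - (c y)\<^sup>2))"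

lemma mass_floor_pos: "0 < mass_floor \<Phi>"
  by (simp add: mass_floor_def)

lemma contraction_rate_pos: "0 < contraction_rate \<Phi>"
  using mass_floor_pos spread by (simp add: contraction_rate_def)

lemma admissible_mass_floor:
  assumes "admissible \<Phi> u"
  shows "p * mass_floor \<Phi> \<le> p * block_mass u x" "(1 - p) * mass_floor \<Phi> \<le> (1 - p) * block_mass u y"
proof -
  have P: "0 < block_mass u x" "block_mass u x \<le> 1" "0 < block_mass u y" "block_mass u y \<le> 1"
    and \<Phi>: "\<Phi> \<le> potential u"
    using assms block_mass_le_one by (auto simp: admissible_def)
  show "p * mass_floor \<Phi> \<le> p * block_mass u x"
  proof (cases "0 < p")
    case True
    then have "exp (\<Phi> / p) \<le> block_mass u x"
      using P \<Phi> weight by (intro exp_div_le_of_weighted_ln_ge) (auto simp: potential_def)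
    then show ?thesis using True by (intro mult_left_mono) (auto simp: mass_floor_def)
  qed (use weight in auto)
  show "(1 - p) * mass_floor \<Phi> \<le> (1 - p) * block_mass u y"
  proof (cases "p < 1")
    case True
    then have "exp (\<Phi> / (1 - p)) \<le> block_mass u y"
      using P \<Phi> weight by (intro exp_div_le_of_weighted_ln_ge) (auto simp: potential_def)
    then show ?thesis using True by (intro mult_left_mono) (auto simp: mass_floor_def)
  qed (use weight in auto)
qed

text \<open>Positive mass at the cosines \<open>c x\<close> and \<open>c y\<close>, which average to zero, forces a
  variance comparable to \<open>a\<^sup>2\<close>; positive mass at \<open>c x\<close> keeps the second moment below \<open>1\<close>.\<close>
lemma admissible_moments:
  assumes "admissible \<Phi> u"
  defines "a \<equiv> mass u c" and "M \<equiv> mass u (\<lambda>b. (c b)\<^sup>2)" and "d \<equiv> mass_floor \<Phi>"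
  shows "d * a\<^sup>2 \<le> M - a\<^sup>2" "d * (p * (1 - (c x)\<^sup>2) + (1 - p) * (1 - (c y)\<^sup>2)) \<le> 1 - M"
proof -
  have unit: "mass u (\<lambda>_. 1) = 1" using assms(1) by (simp add: admissible_def)
  note floor = admissible_mass_floor[OF assms(1), folded d_def]
  have "mass u (\<lambda>b. (c b - a)\<^sup>2) = mass u (\<lambda>b. a\<^sup>2 + (- 2 * a) * c b + 1 * (c b)\<^sup>2)"
    by (simp add: power2_diff algebra_simps)
  also have "\<dots> = M - a\<^sup>2" unfolding mass_quadratic unit a_def M_def by (simp add: power2_eq_square)
  finally have var: "g = x \<or> g = y \<Longrightarrow> (c g - a)\<^sup>2 * block_mass u g \<le> M - a\<^sup>2" for g
    using block_mass_le_mass[of "\<lambda>b. (c b - a)\<^sup>2" g u] by simp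
  have "mass u (\<lambda>b. 1 - (c b)\<^sup>2) = mass u (\<lambda>b. 1 + 0 * c b + (- 1) * (c b)\<^sup>2)" by simp
  also have "\<dots> = 1 - M" unfolding mass_quadratic unit M_def by simp
  finally have edge: "g = x \<or> g = y \<Longrightarrow> (1 - (c g)\<^sup>2) * block_mass u g \<le> 1 - M" for g
    using block_mass_le_mass[of "\<lambda>b. 1 - (c b)\<^sup>2" g u] cos_bound by simp
  have "a\<^sup>2 \<le> p * (c x - a)\<^sup>2 + (1 - p) * (c y - a)\<^sup>2"
  proof -
    have "p * (c x - a)\<^sup>2 + (1 - p) * (c y - a)\<^sup>2
        = p * (c x)\<^sup>2 + (1 - p) * (c y)\<^sup>2 - 2 * a * (p * c x + (1 - p) * c y) + a\<^sup>2"
      by (simp add: power2_diff algebra_simps)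
    then show ?thesis using balanced weight by simp
  qed
  then have "d * a\<^sup>2 \<le> d * (p * (c x - a)\<^sup>2 + (1 - p) * (c y - a)\<^sup>2)"
    using mass_floor_pos[of \<Phi>] unfolding d_def by (intro mult_left_mono) auto
  also have "\<dots> = (c x - a)\<^sup>2 * (p * d) + (c y - a)\<^sup>2 * ((1 - p) * d)" by (simp add: algebra_simps)
  also have "\<dots> \<le> (c x - a)\<^sup>2 * (p * block_mass u x) + (c y - a)\<^sup>2 * ((1 - p) * block_mass u y)"
    using floor by (intro add_mono) (simp_all add: mult_left_mono)
  also have "\<dots> \<le> p * (M - a\<^sup>2) + (1 - p) * (M - a\<^sup>2)"
    using var weight by (intro add_mono) (simp_all add: mult.left_commute mult_left_mono)
  finally show "d * a\<^sup>2 \<le> M - a\<^sup>2" by (simp add: algebra_simps)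
  have "d * (p * (1 - (c x)\<^sup>2) + (1 - p) * (1 - (c y)\<^sup>2))
      = (1 - (c x)\<^sup>2) * (p * d) + (1 - (c y)\<^sup>2) * ((1 - p) * d)" by (simp add: algebra_simps)
  also have "\<dots> \<le> (1 - (c x)\<^sup>2) * (p * block_mass u x) + (1 - (c y)\<^sup>2) * ((1 - p) * block_mass u y)"
    using floor cos_x cos_y by (intro add_mono) (simp_all add: mult_left_mono)
  also have "\<dots> \<le> p * (1 - M) + (1 - p) * (1 - M)"
    using edge weight by (intro add_mono) (simp_all add: mult.left_commute mult_left_mono)
  finally show "d * (p * (1 - (c x)\<^sup>2) + (1 - p) * (1 - (c y)\<^sup>2)) \<le> 1 - M"
    by (simp add: algebra_simps)
qed

lemma admissible_rayleigh_sq_less_one: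
  assumes "admissible \<Phi> u"
  shows "(mass u c)\<^sup>2 < 1"
proof -
  have "0 < mass_floor \<Phi> * (p * (1 - (c x)\<^sup>2) + (1 - p) * (1 - (c y)\<^sup>2))"
    using mass_floor_pos spread by simp
  moreover have "0 \<le> mass_floor \<Phi> * (mass u c)\<^sup>2" using mass_floor_pos[of \<Phi>] by simp
  ultimately show ?thesis using admissible_moments[OF assms] by linarith
qed

lemma block_mass_shift_step:
  assumes L: "rotation L \<sigma>" and u: "admissible \<Phi> u"
  shows "block_mass (shift_step L u) b
    = (1 + (mass u c)\<^sup>2 - 2 * mass u c * c b) * block_mass u b / (1 - (mass u c)\<^sup>2)"
  using u admissible_rayleigh_sq_less_one[OF u]
  unfolding block_mass_def
  by (simp add: admissible_def mass_shift_step[OF L] mass_block_weight[unfolded block_mass_def])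

lemma admissible_shift_step:
  assumes L: "rotation L \<sigma>" and u: "admissible \<Phi> u"
  shows "admissible \<Phi> (shift_step L u)"
proof -
  define a where "a = mass u c"
  define f where "f g = 1 + a\<^sup>2 - 2 * a * g" for g
  have car: "u \<in> carrier_vec n" and unit: "mass u (\<lambda>_. 1) = 1"
    and P: "0 < block_mass u x" "0 < block_mass u y" and \<Phi>: "\<Phi> \<le> potential u"
    using u by (auto simp: admissible_def)
  have a: "a\<^sup>2 < 1" unfolding a_def by (rule admissible_rayleigh_sq_less_one[OF u])
  have f: "0 < f (c x)" "0 < f (c y)"
    unfolding f_def using shift_factor_pos[OF a less_imp_le[OF cos_x]] shift_factor_pos[OF a cos_y] .
  have step: "block_mass (shift_step L u) b = f (c b) * block_mass u b / (1 - a\<^sup>2)" for b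
    using block_mass_shift_step[OF L u] by (simp add: f_def a_def)
  have "mass (shift_step L u) (\<lambda>_. 1) = mass u (\<lambda>b. (1 + a\<^sup>2) + (- 2 * a) * c b + 0 * (c b)\<^sup>2) / (1 - a\<^sup>2)"
    using mass_shift_step[OF L car unit] a by (simp add: a_def algebra_simps)
  also have "\<dots> = 1" unfolding mass_quadratic unit using a by (simp add: a_def power2_eq_square)
  finally have unit': "mass (shift_step L u) (\<lambda>_. 1) = 1" .
  have pos: "0 < block_mass (shift_step L u) x" "0 < block_mass (shift_step L u) y"
    using f P a by (simp_all add: step)
  have "potential (shift_step L u)
      = potential u + (p * ln (f (c x)) + (1 - p) * ln (f (c y))) - ln (1 - a\<^sup>2)"
    using f P a by (simp add: potential_def step ln_div ln_mult algebra_simps)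
  moreover have "ln (1 - a\<^sup>2) \<le> p * ln (f (c x)) + (1 - p) * ln (f (c y))"
    unfolding f_def using a cos_x cos_y weight balanced by (intro ln_one_minus_sq_le_balanced) auto
  ultimately have "potential u \<le> potential (shift_step L u)" by linarith
  then show ?thesis
    using shift_step_carrier[OF L car] unit' pos \<Phi> by (simp add: admissible_def)
qed

lemma rayleigh_shift_step_contracts:
  assumes L: "rotation L \<sigma>" and u: "admissible \<Phi> u"
  shows "\<bar>mass (shift_step L u) c\<bar> \<le> \<bar>mass u c\<bar> * (1 - contraction_rate \<Phi> * (mass u c)\<^sup>2)"
proof -
  define a where "a = mass u c"
  define M where "M = mass u (\<lambda>b. (c b)\<^sup>2)"
  have car: "u \<in> carrier_vec n" and unit: "mass u (\<lambda>_. 1) = 1"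
    using u by (auto simp: admissible_def)
  have a: "a\<^sup>2 < 1" unfolding a_def by (rule admissible_rayleigh_sq_less_one[OF u])
  have "mass (shift_step L u) c = mass u (\<lambda>b. 0 + (1 + a\<^sup>2) * c b + (- 2 * a) * (c b)\<^sup>2) / (1 - a\<^sup>2)"
    using mass_shift_step[OF L car unit] a by (simp add: a_def power2_eq_square algebra_simps)
  also have "\<dots> = (a * (1 + a\<^sup>2) - 2 * a * M) / (1 - a\<^sup>2)"
    unfolding mass_quadratic a_def M_def by (simp add: algebra_simps)
  finally show ?thesis
    using rayleigh_update_contracts[OF admissible_moments[OF u] _ spread a[unfolded a_def]]
      mass_floor_pos[of \<Phi>]
    by (simp add: a_def M_def contraction_rate_def algebra_simps)
qed

lemma admissible_aci_v:
  assumes A: "rotation A \<sigma>" and v0: "admissible \<Phi> v0"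
  shows "admissible \<Phi> (aci_v A v0 k)"
proof (induction k)
  case 0
  then show ?case using v0 by (simp add: aci_v_def)
next
  case (Suc k)
  then have "aci_v A v0 (Suc k) = shift_step (transpose_mat A) (shift_step A (aci_v A v0 k))"
    using aci_next_eq_shift_step[OF A] by (simp add: aci_v_def admissible_def)
  then show ?case
    using admissible_shift_step[OF rotation_transpose[OF A] admissible_shift_step[OF A Suc]] by simp
qed

lemma aci_tendsto_zero:
  assumes A: "rotation A \<sigma>" and v0: "admissible \<Phi> v0"
  shows "aci_alpha_seq A v0 \<longlonglongrightarrow> 0 \<and> aci_beta_seq A v0 \<longlonglongrightarrow> 0"
proof -
  note AT = rotation_transpose[OF A]
  define v where "v k = aci_v A v0 k" for k
  define w where "w k = shift_step A (v k)" for k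
  define e where "e = contraction_rate \<Phi>"
  have adm: "admissible \<Phi> (v k)" for k
    unfolding v_def by (rule admissible_aci_v[OF A v0])
  have car: "v k \<in> carrier_vec n" for k using adm by (simp add: admissible_def)
  have alpha: "aci_alpha_seq A v0 = (\<lambda>k. mass (v k) c)"
    using rotation_rayleigh[OF A car] by (simp add: fun_eq_iff aci_alpha_seq_def aci_alpha_def v_def)
  have beta: "aci_beta_seq A v0 = (\<lambda>k. mass (w k) c)"
    using rotation_rayleigh[OF A shift_step_carrier[OF A car]] aci_w_eq_shift_step[OF A car]
    by (simp add: fun_eq_iff aci_beta_seq_def aci_beta_def v_def w_def)
  have shrink: "\<bar>mass (shift_step L u) c\<bar> \<le> \<bar>mass u c\<bar> * (1 - e * (mass u c)\<^sup>2)"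
    "\<bar>mass u c\<bar> * (1 - e * (mass u c)\<^sup>2) \<le> \<bar>mass u c\<bar>"
    if "rotation L \<tau>" "admissible \<Phi> u" for L \<tau> u
    using rayleigh_shift_step_contracts[OF that] contraction_rate_pos[of \<Phi>]
    by (simp_all add: e_def mult_left_le)
  have w_shrink: "\<bar>mass (w k) c\<bar> \<le> \<bar>mass (v k) c\<bar> * (1 - e * (mass (v k) c)\<^sup>2)" for k
    using shrink(1)[OF A adm] by (simp add: w_def)
  have v_shrink: "\<bar>mass (v (Suc k)) c\<bar> \<le> \<bar>mass (w k) c\<bar>" for k
    using shrink[OF AT admissible_shift_step[OF A adm[of k]]] aci_next_eq_shift_step[OF A car[of k]]
    by (simp add: v_def aci_v_def w_def)
  have "(\<lambda>k. \<bar>mass (v k) c\<bar>) \<longlonglongrightarrow> 0"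
    using w_shrink v_shrink contraction_rate_pos[of \<Phi>]
    by (intro cubic_decay_tendsto_zero[where e = e]) (auto simp: e_def intro: order_trans)
  moreover from this have "(\<lambda>k. \<bar>mass (w k) c\<bar>) \<longlonglongrightarrow> 0"
  proof (rule tendsto_sandwich[of "\<lambda>_. 0", rotated 3])
    show "\<forall>\<^sub>F k in sequentially. \<bar>mass (w k) c\<bar> \<le> \<bar>mass (v k) c\<bar>"
      using w_shrink shrink(2)[OF A adm] by (auto intro: always_eventually order_trans)
  qed auto
  ultimately show ?thesis by (simp add: alpha beta tendsto_rabs_zero_iff)
qed

end

section \<open>The block diagonal matrix of ACI(1)\<close>

definition pair_mate :: "nat \<Rightarrow> nat" where
  "pair_mate d = (if even d then d + 1 else d - 1)"

lemma pair_mate_div_two [simp]: "pair_mate d div 2 = d div 2"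
  and even_pair_mate [simp]: "even (pair_mate d) \<longleftrightarrow> odd d"
  and pair_mate_pair_mate [simp]: "pair_mate (pair_mate d) = d"
  and less_pair_mate_iff: "d < pair_mate d \<longleftrightarrow> even d"
  by (auto simp: pair_mate_def elim: oddE)

lemma pair_mate_less: "d < 2 * m \<Longrightarrow> pair_mate d < 2 * m"
  by (auto simp: pair_mate_def elim: evenE)

lemma same_pair_iff:
  fixes off d m k :: nat
  assumes "d < 2 * m"
  shows "off \<le> k \<and> k < off + 2 * m \<and> (k - off) div 2 = d div 2 \<longleftrightarrow>
    k = off + d \<or> k = off + pair_mate d"
proof -
  have pair: "off \<le> k \<and> k < off + 2 * m \<and> (k - off) div 2 = q \<longleftrightarrow> k = off + 2 * q \<or> k = off + 2 * q + 1"
    if "q < m" for q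
    using that by presburger
  show ?thesis
  proof (cases "even d")
    case True
    then obtain q where "d = 2 * q" by blast
    then show ?thesis using pair[of q] assms by (auto simp: pair_mate_def)
  next
    case False
    then obtain q where "d = 2 * q + 1" using oddE by blast
    then show ?thesis using pair[of q] assms by (auto simp: pair_mate_def)
  qed
qed

text \<open>Coordinate \<open>i\<close> lies in block \<open>aci_block i\<close> (numbered as in \<open>blk_idx\<close>); in a block \<open>G\<^sub>j\<close>,
  \<open>aci_partner i\<close> is the other coordinate and \<open>aci_sine i\<close> the off-diagonal entry of row \<open>i\<close>.\<close>
definition aci_block :: "nat \<Rightarrow> bool \<Rightarrow> bool \<Rightarrow> nat \<Rightarrow> nat" where
  "aci_block m p0 p1 i =
     (if p0 \<and> i = 0 then 0 else if p1 \<and> i = aci_dim m p0 p1 - 1 then m + 1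
      else (i - blk_off p0) div 2 + 1)"

definition aci_partner :: "nat \<Rightarrow> bool \<Rightarrow> bool \<Rightarrow> nat \<Rightarrow> nat" where
  "aci_partner m p0 p1 i =
     (if p0 \<and> i = 0 \<or> p1 \<and> i = aci_dim m p0 p1 - 1 then i
      else blk_off p0 + pair_mate (i - blk_off p0))"

definition aci_sine :: "nat \<Rightarrow> bool \<Rightarrow> bool \<Rightarrow> (nat \<Rightarrow> real) \<Rightarrow> nat \<Rightarrow> real" where
  "aci_sine m p0 p1 s i =
     (if p0 \<and> i = 0 \<or> p1 \<and> i = aci_dim m p0 p1 - 1 then 0
      else if even (i - blk_off p0) then s (aci_block m p0 p1 i) else - s (aci_block m p0 p1 i))"

lemma aci_middle_index:
  assumes "d < 2 * m"
  shows "aci_block m p0 p1 (blk_off p0 + d) = d div 2 + 1"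
    "aci_partner m p0 p1 (blk_off p0 + d) = blk_off p0 + pair_mate d"
    "aci_sine m p0 p1 s (blk_off p0 + d) = (if even d then s (d div 2 + 1) else - s (d div 2 + 1))"
proof -
  have "\<not> (p0 \<and> blk_off p0 + d = 0 \<or> p1 \<and> blk_off p0 + d = aci_dim m p0 p1 - 1)"
    using assms unfolding aci_dim_def blk_off_def by auto
  then show "aci_block m p0 p1 (blk_off p0 + d) = d div 2 + 1"
    "aci_partner m p0 p1 (blk_off p0 + d) = blk_off p0 + pair_mate d"
    "aci_sine m p0 p1 s (blk_off p0 + d) = (if even d then s (d div 2 + 1) else - s (d div 2 + 1))"
    unfolding aci_block_def aci_partner_def aci_sine_def by (auto simp del: de_Morgan_disj)
qed

lemma aci_index_cases:
  assumes "i < aci_dim m p0 p1"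
  obtains "p0" "i = 0" "aci_block m p0 p1 i = 0" "aci_partner m p0 p1 i = i" "aci_sine m p0 p1 s i = 0"
  | "p1" "i = aci_dim m p0 p1 - 1" "\<not> (p0 \<and> i = 0)" "aci_block m p0 p1 i = m + 1"
    "aci_partner m p0 p1 i = i" "aci_sine m p0 p1 s i = 0"
  | d where "d < 2 * m" "i = blk_off p0 + d"
proof -
  have "p0 \<and> i = 0 \<or> p1 \<and> i = aci_dim m p0 p1 - 1 \<and> \<not> (p0 \<and> i = 0)
      \<or> (\<exists>d < 2 * m. i = blk_off p0 + d)"
    using assms by (cases p0; cases p1) (auto simp: aci_dim_def blk_off_def intro: exI[of _ "i - 1"])
  then show ?thesis
  proof (elim disjE exE conjE)
    assume "p0" "i = 0"
    then show ?thesis by (intro that(1)) (simp_all add: aci_block_def aci_partner_def aci_sine_def)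
  next
    assume "p1" "i = aci_dim m p0 p1 - 1" "\<not> (p0 \<and> i = 0)"
    then show ?thesis by (intro that(2)) (simp_all add: aci_block_def aci_partner_def aci_sine_def)
  qed (rule that(3))
qed

lemma aci_mat_entry_middle:
  assumes d: "d < 2 * m" and k: "k < aci_dim m p0 p1"
  defines "i \<equiv> blk_off p0 + d"
  shows "aci_mat m p0 p1 c s $$ (i, k) =
    (if k = i then c (d div 2 + 1)
     else if k = blk_off p0 + pair_mate d then (if even d then s (d div 2 + 1) else - s (d div 2 + 1))
     else 0)"
proof -
  define off where "off = blk_off p0"
  have i: "i < aci_dim m p0 p1" "\<not> (p0 \<and> i = 0)" "\<not> (p1 \<and> i = aci_dim m p0 p1 - 1)"
    using d unfolding i_def aci_dim_def blk_off_def by auto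
  have "aci_mat m p0 p1 c s $$ (i, k) =
      (if off \<le> k \<and> k < off + 2 * m \<and> (k - off) div 2 = d div 2 then
         (if i = k then c (d div 2 + 1) else if i < k then s (d div 2 + 1) else - s (d div 2 + 1))
       else 0)"
    using i k d by (auto simp: aci_mat_def Let_def i_def off_def)
  also have "\<dots> = (if k = off + d \<or> k = off + pair_mate d then
         (if i = k then c (d div 2 + 1) else if i < k then s (d div 2 + 1) else - s (d div 2 + 1))
       else 0)"
    unfolding same_pair_iff[OF d] ..
  finally show ?thesis by (auto simp: i_def off_def less_pair_mate_iff)
qed

lemma aci_mat_entry:
  assumes "i < aci_dim m p0 p1" "k < aci_dim m p0 p1" "c 0 = -1" "c (m + 1) = 1"
  shows "aci_mat m p0 p1 c s $$ (i, k) =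
    (if k = i then c (aci_block m p0 p1 i)
     else if k = aci_partner m p0 p1 i then aci_sine m p0 p1 s i else 0)"
  using assms(1)
proof (cases rule: aci_index_cases[where s = s])
  case 1
  have "\<not> blk_off p0 \<le> i" "aci_dim m p0 p1 \<noteq> 1 \<or> \<not> p1"
    using 1(1,2) by (auto simp: blk_off_def aci_dim_def)
  then show ?thesis
    unfolding 1(3-5) using 1(1,2) assms(2,3) by (auto simp: aci_mat_def Let_def)
next
  case 2
  have "\<not> i < blk_off p0 + 2 * m" using 2(1,2) by (auto simp: aci_dim_def)
  then show ?thesis
    unfolding 2(4-6) using 2(1-3) assms(1,2,4) by (auto simp: aci_mat_def Let_def)
next
  case (3 d)
  then show ?thesis
    using assms(2) by (simp add: aci_mat_entry_middle aci_middle_index)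
qed

lemma aci_partner_props:
  assumes "i < aci_dim m p0 p1"
  shows "aci_partner m p0 p1 i < aci_dim m p0 p1" (is ?less)
    and "aci_partner m p0 p1 (aci_partner m p0 p1 i) = i" (is ?invol)
    and "aci_block m p0 p1 (aci_partner m p0 p1 i) = aci_block m p0 p1 i" (is ?block)
    and "aci_sine m p0 p1 s (aci_partner m p0 p1 i) = - aci_sine m p0 p1 s i" (is ?sine)
proof -
  from assms have "?less \<and> ?invol \<and> ?block \<and> ?sine"
  proof (cases rule: aci_index_cases[where s = s])
    case (3 d)
    then show ?thesis
      using pair_mate_less[OF 3(1)]
      by (simp add: aci_middle_index aci_middle_index[OF pair_mate_less[OF 3(1)]] aci_dim_def)
  qed (use assms in simp_all)
  then show ?less ?invol ?block ?sine by blast+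
qed

lemma aci_paired_rotation:
  "paired_rotation (aci_dim m p0 p1) (aci_partner m p0 p1) (aci_block m p0 p1)"
  by unfold_locales (simp_all add: aci_partner_props)

lemma aci_mat_rotation:
  assumes "\<And>j. 1 \<le> j \<Longrightarrow> j \<le> m \<Longrightarrow> (c j)\<^sup>2 + (s j)\<^sup>2 = 1" "c 0 = -1" "c (m + 1) = 1"
  shows "paired_rotation.rotation (aci_dim m p0 p1) (aci_partner m p0 p1) (aci_block m p0 p1) c
    (aci_mat m p0 p1 c s) (aci_sine m p0 p1 s)"
proof -
  have "(c (aci_block m p0 p1 i))\<^sup>2 + (aci_sine m p0 p1 s i)\<^sup>2 = 1" if "i < aci_dim m p0 p1" for i
    using that
  proof (cases rule: aci_index_cases[where s = s])
    case 1
    show ?thesis unfolding 1(3,5) assms(2) by simp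
  next
    case 2
    show ?thesis unfolding 2(4,6) assms(3) by simp
  next
    case (3 d)
    then show ?thesis using assms(1)[of "d div 2 + 1"] by (simp add: aci_middle_index)
  qed
  moreover have "aci_mat m p0 p1 c s \<in> carrier_mat (aci_dim m p0 p1) (aci_dim m p0 p1)"
    by (simp add: aci_mat_def Let_def)
  ultimately show ?thesis
    unfolding paired_rotation.rotation_def[OF aci_paired_rotation]
    using assms(2,3) by (simp add: aci_mat_entry aci_partner_props)
qed

lemma aci_block_of_blk_idx:
  assumes "blk_present m p0 p1 z" "i \<in> blk_idx m p0 p1 z"
  shows "i < aci_dim m p0 p1 \<and> aci_block m p0 p1 i = z"
proof -
  consider "z = 0" | "z = m + 1" "z \<noteq> 0" | "1 \<le> z" "z \<le> m"
    using assms(1) by (force simp: blk_present_def)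
  then show ?thesis
  proof cases
    case 1
    then have "p0" "i = 0" using assms by (simp_all add: blk_present_def blk_idx_def)
    then show ?thesis using 1 by (simp add: aci_block_def aci_dim_def blk_off_def)
  next
    case 2
    then have "p1" "i = aci_dim m p0 p1 - 1" using assms by (simp_all add: blk_present_def blk_idx_def)
    then show ?thesis using 2 by (simp add: aci_block_def aci_dim_def blk_off_def)
  next
    case 3
    then obtain d where "d = 2 * (z - 1) \<or> d = 2 * (z - 1) + 1" and i: "i = blk_off p0 + d"
      using assms(2) by (auto simp: blk_idx_def)
    then have "d < 2 * m" "z = d div 2 + 1" using 3 by auto
    with i show ?thesis using aci_middle_index(1)[of d m p0 p1] by (simp add: aci_dim_def)
  qed
qed


lemma blk_present_cos_sq_le_one:
  fixes c s :: "nat \<Rightarrow> real"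
  assumes "\<And>j. 1 \<le> j \<Longrightarrow> j \<le> m \<Longrightarrow> (c j)\<^sup>2 + (s j)\<^sup>2 = 1" "c 0 = -1" "c (m + 1) = 1"
    and "blk_present m p0 p1 z"
  shows "(c z)\<^sup>2 \<le> 1"
proof (cases "z = 0 \<or> z = m + 1")
  case False
  then have "1 \<le> z" "z \<le> m" using assms(4) by (auto simp: blk_present_def)
  then have "(c z)\<^sup>2 + (s z)\<^sup>2 = 1" by (rule assms(1))
  then show ?thesis using zero_le_power2[of "s z"] by linarith
qed (use assms(2,3) in auto)

theorem lemma4p9:
  fixes m :: nat and p0 p1 :: bool and c s :: "nat \<Rightarrow> real" and v0 :: "real vec"
  assumes "m \<ge> 1"
    and "\<And>j. 1 \<le> j \<Longrightarrow> j \<le> m \<Longrightarrow> (c j)\<^sup>2 + (s j)\<^sup>2 = 1"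
    and "\<And>j. 1 \<le> j \<Longrightarrow> j \<le> m \<Longrightarrow> s j \<noteq> 0"
    and "c 0 = -1" and "c (m + 1) = 1"
    and "strict_mono_on {0..m+1} c"
    and "v0 \<in> carrier_vec (aci_dim m p0 p1)"
    and "vnorm v0 = 1"
    and "grade (aci_mat m p0 p1 c s) v0 \<ge> 2"
    and "1 \<le> l" and "l \<le> m" and "blk_nonzero m p0 p1 v0 l"
    and "blk_present m p0 p1 j" and "blk_nonzero m p0 p1 v0 j" and "c l * c j \<le> 0"
  shows "aci_alpha_seq (aci_mat m p0 p1 c s) v0 \<longlonglongrightarrow> 0
       \<and> aci_beta_seq (aci_mat m p0 p1 c s) v0 \<longlonglongrightarrow> 0"
proof -
  interpret paired_rotation "aci_dim m p0 p1" "aci_partner m p0 p1" "aci_block m p0 p1" c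
    by (rule aci_paired_rotation)
  have A: "rotation (aci_mat m p0 p1 c s) (aci_sine m p0 p1 s)"
    using assms(2,4,5) by (rule aci_mat_rotation)
  have "0 < (s l)\<^sup>2" using assms(3)[OF assms(10,11)] by simp
  then have cos_l: "(c l)\<^sup>2 < 1" using assms(2)[OF assms(10,11)] by linarith
  have cos_j: "(c j)\<^sup>2 \<le> 1" using assms(2,4,5,13) by (rule blk_present_cos_sq_le_one)
  obtain p where p: "0 \<le> p" "p \<le> 1" "p * c l + (1 - p) * c j = 0"
    "0 < p * (1 - (c l)\<^sup>2) + (1 - p) * (1 - (c j)\<^sup>2)"
    using balancing_weight[OF assms(15) cos_l cos_j] by blast
  interpret two_block_descent "aci_dim m p0 p1" "aci_partner m p0 p1" "aci_block m p0 p1" c l j p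
    using rotation_cos_sq_le_one[OF A] cos_l cos_j p by unfold_locales
  have mass_pos: "0 < block_mass v0 z" if z: "blk_present m p0 p1 z" "blk_nonzero m p0 p1 v0 z" for z
  proof -
    obtain i where "i \<in> blk_idx m p0 p1 z" "v0 $ i \<noteq> 0" using z(2) by (auto simp: blk_nonzero_def)
    then show ?thesis using aci_block_of_blk_idx[OF z(1)] by (blast intro: block_mass_pos)
  qed
  have "mass v0 (\<lambda>_. 1) = 1" using assms(7,8) vnorm_eq_sqrt_mass by simp
  then have "admissible (potential v0) v0"
    using assms(7,10-14) mass_pos by (simp add: admissible_def blk_present_def)
  then show ?thesis by (rule aci_tendsto_zero[OF A])
qed

end
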